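(* Let $U=(u_{ij}),V=(v_{ij})\in\mathcal{U}_d(\mathbb{C})$, and let $R_U=(r_{ij})$, $R_V=(s_{ij})$ be real matrices with non-negative entries such that $r_{ij}=0$ iff $u_{ij}=0$ (and $r_{ij}>0$ otherwise), and $s_{ij}=0$ iff $v_{ij}=0$ (and $s_{ij}>0$ otherwise). Then there exists $D\in\mathcal{DU}_d(\mathbb{C})$ such that for all $k,l\in\{1,\dots,d\}$, $$(R_UR_V)_{kl}\neq 0\iff (UDV)_{kl}\neq 0.$$
   Context: $\mathcal{U}_d(\mathbb{C})$ denotes the group of $d\times d$ unitary matrices and $\mathcal{DU}_d(\mathbb{C})$ its subgroup of diagonal unitary matrices. *)

theory Defs
  imports "HOL-Analysis.Analysis"
begin

definition conj_transpose :: "complex^'n^'m \<Rightarrow> complex^'m^'n" where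
  "conj_transpose A = (\<chi> i j. cnj (A $ j $ i))"

definition unitary_mat :: "complex^'n^'n \<Rightarrow> bool" where
  "unitary_mat U \<longleftrightarrow> U ** conj_transpose U = mat 1 \<and> conj_transpose U ** U = mat 1"

definition diagonal_mat :: "('a::zero)^'n^'n \<Rightarrow> bool" where
  "diagonal_mat D \<longleftrightarrow> (\<forall>i j. i \<noteq> j \<longrightarrow> D $ i $ j = 0)"

definition diag_unitary_mat :: "complex^'n^'n \<Rightarrow> bool" where
  "diag_unitary_mat D \<longleftrightarrow> unitary_mat D \<and> diagonal_mat D"

end

theory Submission
  imports Defs "HOL-Computational_Algebra.Polynomial"
begin

text \<open>
  Write \<open>(U D V)\<^sub>k\<^sub>l = \<Sum>\<^sub>j u\<^sub>k\<^sub>j d\<^sub>j v\<^sub>j\<^sub>l\<close>, while \<open>(R\<^sub>U R\<^sub>V)\<^sub>k\<^sub>l\<close> is a sum of non-negative terms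
  and hence vanishes exactly when every product \<open>u\<^sub>k\<^sub>j v\<^sub>j\<^sub>l\<close> does. Choosing the phases
  \<open>d\<^sub>j = z\<^bsup>m j\<^esup>\<close> with pairwise distinct exponents \<open>m j\<close> turns each entry of \<open>U D V\<close> into
  the value at \<open>z\<close> of a polynomial which is nonzero as soon as one product \<open>u\<^sub>k\<^sub>j v\<^sub>j\<^sub>l\<close> is.
  These finitely many polynomials have finitely many roots, while the unit circle is
  infinite, so a suitable \<open>z\<close> of modulus one exists.
\<close>

lemma uncountable_sphere:
  fixes a :: "'a::euclidean_space"
  assumes "2 \<le> DIM('a)" and "r > 0"
  shows "uncountable (sphere a r)"
proof -
  obtain b :: 'a where b: "b \<in> Basis"
    using nonempty_Basis by blast
  show ?thesis
  proof (rule connected_uncountable)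
    show "connected (sphere a r)"
      using assms(1) by (rule connected_sphere)
    show "a + r *\<^sub>R b \<in> sphere a r" "a - r *\<^sub>R b \<in> sphere a r"
      using assms(2) b by (simp_all add: dist_norm)
    show "a + r *\<^sub>R b \<noteq> a - r *\<^sub>R b"
      using assms(2) b by (simp add: eq_neg_iff_add_eq_0 scaleR_2[symmetric] nonzero_Basis)
  qed
qed

lemma exists_unit_circle_nonroot:
  fixes P :: "complex poly set"
  assumes "finite P" and "0 \<notin> P"
  shows "\<exists>z. norm z = 1 \<and> (\<forall>p\<in>P. poly p z \<noteq> 0)"
proof -
  have "finite (\<Union>p\<in>P. {z. poly p z = 0})"
    using assms by (intro finite_UN_I) (auto intro: poly_roots_finite)
  moreover have "infinite (sphere (0::complex) 1)"
    by (intro uncountable_infinite uncountable_sphere) auto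
  ultimately have "sphere 0 1 - (\<Union>p\<in>P. {z. poly p z = 0}) \<noteq> {}"
    using Diff_infinite_finite infinite_imp_nonempty by blast
  then show ?thesis
    by auto
qed

lemma coeff_sum_monom_inj_on:
  assumes "finite A" and "inj_on m A" and "i \<in> A"
  shows "coeff (\<Sum>j\<in>A. monom (c j) (m j)) (m i) = c i"
proof -
  have "coeff (\<Sum>j\<in>A. monom (c j) (m j)) (m i) = (\<Sum>j\<in>A. if j = i then c j else 0)"
    unfolding coeff_sum coeff_monom
    by (rule sum.cong) (use assms in \<open>auto dest: inj_onD\<close>)
  also have "\<dots> = c i"
    using assms by simp
  finally show ?thesis .
qed

lemma sum_monom_nonzero:
  assumes "finite A" and "inj_on m A" and "i \<in> A" and "c i \<noteq> 0"
  shows "(\<Sum>j\<in>A. monom (c j) (m j)) \<noteq> 0"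
proof
  assume "(\<Sum>j\<in>A. monom (c j) (m j)) = 0"
  then have "coeff (\<Sum>j\<in>A. monom (c j) (m j)) (m i) = 0"
    by simp
  with coeff_sum_monom_inj_on[OF assms(1-3), of c] assms(4) show False
    by simp
qed

definition diag_mat :: "('n \<Rightarrow> 'a::zero) \<Rightarrow> 'a^'n^'n" where
  "diag_mat c = (\<chi> i j. if i = j then c i else 0)"

lemma matrix_mult_diag_mat_mult:
  fixes A :: "'a::semiring_1^'n^'m" and B :: "'a^'p^'n"
  shows "(A ** diag_mat c ** B) $ k $ l = (\<Sum>j\<in>UNIV. A $ k $ j * c j * B $ j $ l)"
proof -
  have "(A ** diag_mat c) $ k $ j = A $ k $ j * c j" for j
    unfolding matrix_matrix_mult_def diag_mat_def
    by (simp add: if_distrib[where f="\<lambda>x. _ * x"] cong: if_cong)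
  then show ?thesis
    by (simp add: matrix_matrix_mult_def)
qed

lemma diag_unitary_mat_diag_mat:
  fixes c :: "'n::finite \<Rightarrow> complex"
  assumes "\<And>j. norm (c j) = 1"
  shows "diag_unitary_mat (diag_mat c)"
proof -
  have "c j * cnj (c j) = 1" "cnj (c j) * c j = 1" for j
    using assms[of j] complex_norm_square[of "c j"] by (simp_all add: mult.commute)
  then have "unitary_mat (diag_mat c)"
    unfolding unitary_mat_def conj_transpose_def diag_mat_def
    by (auto simp: matrix_matrix_mult_def mat_def vec_eq_iff
        if_distrib[where f="\<lambda>x. x * _"] if_distrib[where f="\<lambda>x. _ * x"] cong: if_cong)
  then show ?thesis
    unfolding diag_unitary_mat_def diagonal_mat_def diag_mat_def by simp
qed

lemma matrix_mult_nonneg_nonzero_iff: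
  fixes R :: "'a::linordered_idom^'n^'m" and S :: "'a^'p^'n"
  assumes "\<And>i j. R $ i $ j \<ge> 0" and "\<And>i j. S $ i $ j \<ge> 0"
  shows "(R ** S) $ k $ l \<noteq> 0 \<longleftrightarrow> (\<exists>j. R $ k $ j \<noteq> 0 \<and> S $ j $ l \<noteq> 0)"
proof -
  have "(R ** S) $ k $ l = (\<Sum>j\<in>UNIV. R $ k $ j * S $ j $ l)"
    by (simp add: matrix_matrix_mult_def)
  also have "\<dots> = 0 \<longleftrightarrow> (\<forall>j. R $ k $ j * S $ j $ l = 0)"
    using assms by (subst sum_nonneg_eq_0_iff) auto
  finally show ?thesis
    by auto
qed

lemma exists_generic_phases:
  fixes A :: "complex^'n^'m" and B :: "complex^'p^'n"
  shows "\<exists>c. (\<forall>j. norm (c j) = 1) \<and>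
           (\<forall>k l. (A ** diag_mat c ** B) $ k $ l \<noteq> 0 \<longleftrightarrow> (\<exists>j. A $ k $ j \<noteq> 0 \<and> B $ j $ l \<noteq> 0))"
proof -
  obtain m :: "'n \<Rightarrow> nat" where m: "inj m"
    using finite_imp_inj_to_nat_seg[of "UNIV :: 'n set"] by auto
  define P where "P k l = (\<Sum>j\<in>UNIV. monom (A $ k $ j * B $ j $ l) (m j))" for k l
  have "finite {P k l |k l. P k l \<noteq> 0}"
    by (rule finite_subset[of _ "(\<lambda>(k, l). P k l) ` UNIV"]) auto
  then obtain z where z: "norm z = 1" and nonroot: "\<And>k l. P k l \<noteq> 0 \<Longrightarrow> poly (P k l) z \<noteq> 0"
    using exists_unit_circle_nonroot[of "{P k l |k l. P k l \<noteq> 0}"] by auto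
  have entry: "(A ** diag_mat (\<lambda>j. z ^ m j) ** B) $ k $ l = poly (P k l) z" for k l
    unfolding matrix_mult_diag_mat_mult P_def poly_sum poly_monom
    by (simp add: mult_ac)
  have "poly (P k l) z \<noteq> 0 \<longleftrightarrow> (\<exists>j. A $ k $ j \<noteq> 0 \<and> B $ j $ l \<noteq> 0)" for k l
  proof
    assume "poly (P k l) z \<noteq> 0"
    show "\<exists>j. A $ k $ j \<noteq> 0 \<and> B $ j $ l \<noteq> 0"
    proof (rule ccontr)
      assume "\<nexists>j. A $ k $ j \<noteq> 0 \<and> B $ j $ l \<noteq> 0"
      then have "P k l = 0"
        unfolding P_def by (intro sum.neutral) auto
      with \<open>poly (P k l) z \<noteq> 0\<close> show False
        by simp
    qed
  next
    assume "\<exists>j. A $ k $ j \<noteq> 0 \<and> B $ j $ l \<noteq> 0"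
    then obtain j where "A $ k $ j * B $ j $ l \<noteq> 0"
      by auto
    then have "P k l \<noteq> 0"
      unfolding P_def by (rule sum_monom_nonzero[of UNIV m j, rotated 3]) (use m in auto)
    then show "poly (P k l) z \<noteq> 0"
      by (rule nonroot)
  qed
  then show ?thesis
    using z entry by (intro exI[of _ "\<lambda>j. z ^ m j"]) (simp add: norm_power)
qed

theorem lemma22:
  fixes U V :: "complex^'n^'n" and RU RV :: "real^'n^'n"
  assumes "unitary_mat U" and "unitary_mat V"
    and "\<forall>i j. RU $ i $ j \<ge> 0 \<and> (RU $ i $ j = 0 \<longleftrightarrow> U $ i $ j = 0)"
    and "\<forall>i j. RV $ i $ j \<ge> 0 \<and> (RV $ i $ j = 0 \<longleftrightarrow> V $ i $ j = 0)"
  shows "\<exists>D. diag_unitary_mat D \<and>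
           (\<forall>k l. (RU ** RV) $ k $ l \<noteq> 0 \<longleftrightarrow> (U ** D ** V) $ k $ l \<noteq> 0)"
proof -
  obtain c where c: "\<And>j. norm (c j) = 1"
    and UDV: "\<And>k l. (U ** diag_mat c ** V) $ k $ l \<noteq> 0 \<longleftrightarrow> (\<exists>j. U $ k $ j \<noteq> 0 \<and> V $ j $ l \<noteq> 0)"
    using exists_generic_phases by blast
  have "(RU ** RV) $ k $ l \<noteq> 0 \<longleftrightarrow> (\<exists>j. U $ k $ j \<noteq> 0 \<and> V $ j $ l \<noteq> 0)" for k l
    using matrix_mult_nonneg_nonzero_iff[of RU RV k l] assms(3,4) by auto
  moreover have "diag_unitary_mat (diag_mat c)"
    using c by (rule diag_unitary_mat_diag_mat)
  ultimately show ?thesis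
    using UDV by blast
qed

end
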